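(* Let $A=\sigma(R)\langle x_1,\dots,x_n\rangle$ be a quasi-commutative bijective $\sigma$-PBW extension of a left Noetherian ring $R$. Let $c_1,\dots,c_t\in R\setminus\{0\}$ and let $\mathbf X_1,\dots,\mathbf X_t$ be monomials of $A^m$. Let $L=[c_1\mathbf X_1\ \cdots\ c_t\mathbf X_t]$ and $$\mathrm{Syz}(L)=\{(h_1,\dots,h_t)^T\in A^t:\sum_jh_jc_j\mathbf X_j=\mathbf 0\}.$$ Put $\beta_j=\exp(\mathbf X_j)$. For each nonempty $J\subseteq\{1,\dots,t\}$ that is saturated with respect to $\{\mathbf X_1,\dots,\mathbf X_t\}$ and satisfies $\mathbf X_J\neq\mathbf 0$: - let $\gamma_j\in\mathbb N^n$ ($j\in J$) be defined by $\gamma_j+\beta_j=\exp(\mathbf X_J)$; - let $B^J=\{\mathbf b^J_1,\dots,\mathbf b^J_{r_J}\}$, with $\mathbf b^J_v=(b^J_{vj})_{j\in J}$, be a finite generating set of the left $R$-module $$\mathrm{Syz}_R[\sigma^{\gamma_j}(c_j)c_{\gamma_j,\beta_j}\mid j\in J]=\Big\{(b_j)_{j\in J}\in R^J:\sum_{j\in J}b_j\sigma^{\gamma_j}(c_j)c_{\gamma_j,\beta_j}=0\Big\};$$ - put $\mathbf s^J_v=\sum_{j\in J}b^J_{vj}x^{\gamma_j}\tilde{\mathbf e}_j\in A^t$, where $\tilde{\mathbf e}_1,\dots,\tilde{\mathbf e}_t$ is the canonical basis of $A^t$. Then each $\mathbf s^J_v$ is a homogeneous syzygy of $\mathrm{Syz}(L)$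 of degree $\mathbf X_J$. Moreover, the set of all such $\mathbf s^J_v$ (over all such saturated $J$ and $1\le v\le r_J$) generates $\mathrm{Syz}(L)$ as a left $A$-module.
   Context: Let $R\subseteq A$ be rings. $A$ is a $\sigma$-PBW extension of $R$, written $A=\sigma(R)\langle x_1,\dots,x_n\rangle$, if there are $x_1,\dots,x_n\in A\setminus R$ such that: (i) $A$ is a free left $R$-module with basis $\mathrm{Mon}(A)=\{x^\alpha=x_1^{\alpha_1}\cdots x_n^{\alpha_n}:\alpha\in\mathbb N^n\}$, with $x^0=1$; (ii) for every $i$ and every $r\in R\setminus\{0\}$ there is $c_{i,r}\in R\setminus\{0\}$ with $x_ir-c_{i,r}x_i\in R$; (iii) for all $i,j$ there is $c_{i,j}\in R\setminus\{0\}$ with $x_jx_i-c_{i,j}x_ix_j\in R+Rx_1+\dots+Rx_n$. There are injective ring endomorphisms $\sigma_i$ of $R$ with $x_ir=\sigma_i(r)x_i+\delta_i(r)$, where $\delta_i$ are $\sigma_i$-derivations. Write $\sigma^\alpha=\sigma_1^{\alpha_1}\circ\cdots\circ\sigma_n^{\alpha_n}$. For $\alpha,\beta$ there are unique $c_{\alpha,\beta}\in R$ and $p_{\alpha,\beta}\in A$ with $x^\alpha x^\beta=c_{\alpha,\beta}x^{\alpha+\beta}+p_{\alpha,\beta}$, where $p_{\alpha,\beta}=0$ or $\deg p_{\alpha,\beta}<|\alpha+\beta|$. $A$ is quasi-commutative if $x_ir=c_{i,r}x_i$ and $x_jx_i=c_{i,j}x_ix_j$ exactly (then $p_{\alpha,\beta}=0$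 and $x^\alpha r=\sigma^\alpha(r)x^\alpha$). $A$ is bijective if each $\sigma_i$ is bijective and $c_{i,j}$ is invertible for $i<j$ (then all $c_{\alpha,\beta}$ are invertible). $\mathrm{Mon}(A)$ carries a monomial order (a total order compatible with multiplication via leading monomials, with $x^\alpha\succeq1$, degree compatible); $lm$ denotes leading monomial, $lm(x^\alpha x^\beta)=x^{\alpha+\beta}$. Monomials of $A^m$ are $x^\alpha\mathbf e_i$, with $\exp(x^\alpha\mathbf e_i)=\alpha$. The monomial $x^\alpha\mathbf e_i$ divides $x^\beta\mathbf e_j$ iff $i=j$ and $\beta_k\ge\alpha_k$ for all $k$. For $J\subseteq\{1,\dots,t\}$, $\mathbf X_J=\mathrm{lcm}\{\mathbf X_j:j\in J\}$, where the lcm of $x^\alpha\mathbf e_i$ and $x^\beta\mathbf e_j$ is $\mathbf 0$ if $i\neq j$, and $x^\gamma\mathbf e_i$ with $\gamma_k=\max(\alpha_k,\beta_k)$ if $i=j$. $J$ is saturated w.r.t. $\{\mathbf X_1,\dots,\mathbf X_t\}$ if for every $j\in\{1,\dots,t\}$, $\mathbf X_j\mid\mathbf X_J$ implies $j\in J$. A term of $A$ is $cx^\alpha$ with $c\in R$. A syzygy $\mathbf h=(h_1,\dots,h_t)^T\in\mathrm{Syz}(L)$ is homogeneous of degree $\mathbf X=X\mathbf e_i$ if each $h_j$ is a term and, for each $j$, either $h_j=0$ or $lm(lm(h_j)\mathbf X_j)=\mathbf X$. *)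

theory Defs
  imports Main
begin

(* The ring A is the whole type 'a; R is a subset of it.  Variables x_1..x_n are
   x 0 .. x (n-1); exponent vectors are nat => nat vanishing at indices >= n. *)

definition expv :: "nat \<Rightarrow> (nat \<Rightarrow> nat) set" where
  "expv n = {\<alpha>. \<forall>k\<ge>n. \<alpha> k = 0}"

definition mon :: "(nat \<Rightarrow> 'a::ring_1) \<Rightarrow> nat \<Rightarrow> (nat \<Rightarrow> nat) \<Rightarrow> 'a" where
  "mon x n \<alpha> = prod_list (map (\<lambda>i. x i ^ \<alpha> i) [0..<n])"

definition is_repr :: "'a::ring_1 set \<Rightarrow> (nat \<Rightarrow> 'a) \<Rightarrow> nat \<Rightarrow> ((nat \<Rightarrow> nat) \<Rightarrow> 'a) \<Rightarrow> 'a \<Rightarrow> bool" where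
  "is_repr R x n f a \<longleftrightarrow> (\<forall>\<alpha>. f \<alpha> \<in> R) \<and> finite {\<alpha>. f \<alpha> \<noteq> 0} \<and> {\<alpha>. f \<alpha> \<noteq> 0} \<subseteq> expv n
     \<and> a = (\<Sum>\<alpha>\<in>{\<alpha>. f \<alpha> \<noteq> 0}. f \<alpha> * mon x n \<alpha>)"

definition coord :: "'a::ring_1 set \<Rightarrow> (nat \<Rightarrow> 'a) \<Rightarrow> nat \<Rightarrow> 'a \<Rightarrow> (nat \<Rightarrow> nat) \<Rightarrow> 'a" where
  "coord R x n a = (THE f. is_repr R x n f a)"

definition subring :: "'a::ring_1 set \<Rightarrow> bool" where
  "subring R \<longleftrightarrow> 0 \<in> R \<and> 1 \<in> R \<and> (\<forall>a\<in>R. \<forall>b\<in>R. a + b \<in> R \<and> - a \<in> R \<and> a * b \<in> R)"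

definition left_ideal :: "'a::ring_1 set \<Rightarrow> 'a set \<Rightarrow> bool" where
  "left_ideal R I \<longleftrightarrow> I \<subseteq> R \<and> 0 \<in> I \<and> (\<forall>a\<in>I. \<forall>b\<in>I. a + b \<in> I) \<and> (\<forall>r\<in>R. \<forall>a\<in>I. r * a \<in> I)"

definition lspan :: "'a::ring_1 set \<Rightarrow> 'a set \<Rightarrow> 'a set" where
  "lspan K S = {a. \<exists>F c. finite F \<and> F \<subseteq> S \<and> (\<forall>s\<in>F. c s \<in> K) \<and> a = (\<Sum>s\<in>F. c s * s)}"

definition left_noetherian :: "'a::ring_1 set \<Rightarrow> bool" where
  "left_noetherian R \<longleftrightarrow> (\<forall>I. left_ideal R I \<longrightarrow> (\<exists>F. finite F \<and> F \<subseteq> I \<and> I = lspan R F))"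

definition sigma_PBW :: "'a::ring_1 set \<Rightarrow> (nat \<Rightarrow> 'a) \<Rightarrow> nat \<Rightarrow> bool" where
  "sigma_PBW R x n \<longleftrightarrow> subring R \<and> (\<forall>i<n. x i \<notin> R)
     \<and> (\<forall>a. \<exists>!f. is_repr R x n f a)
     \<and> (\<forall>i<n. \<forall>r\<in>R - {0}. \<exists>c\<in>R - {0}. x i * r - c * x i \<in> R)
     \<and> (\<forall>i<n. \<forall>j<n. \<exists>c\<in>R - {0}. \<exists>d\<in>R. \<exists>e. (\<forall>k. e k \<in> R)
           \<and> x j * x i - c * x i * x j = d + (\<Sum>k<n. e k * x k))"

definition quasi_commutative :: "'a::ring_1 set \<Rightarrow> (nat \<Rightarrow> 'a) \<Rightarrow> nat \<Rightarrow> bool" where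
  "quasi_commutative R x n \<longleftrightarrow>
     (\<forall>i<n. \<forall>r\<in>R - {0}. \<exists>c\<in>R - {0}. x i * r = c * x i)
     \<and> (\<forall>i<n. \<forall>j<n. \<exists>c\<in>R - {0}. x j * x i = c * x i * x j)"

definition ei :: "nat \<Rightarrow> nat \<Rightarrow> nat" where
  "ei i = (\<lambda>k. if k = i then 1 else 0)"

(* sigma_i(r) = coefficient of x_i in x_i r  (since x_i r = sigma_i(r) x_i + delta_i(r)) *)
definition sig :: "'a::ring_1 set \<Rightarrow> (nat \<Rightarrow> 'a) \<Rightarrow> nat \<Rightarrow> nat \<Rightarrow> 'a \<Rightarrow> 'a" where
  "sig R x n i r = coord R x n (x i * r) (ei i)"

(* sigma^alpha = sigma_1^alpha_1 o ... o sigma_n^alpha_n *)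
definition sig_pow :: "'a::ring_1 set \<Rightarrow> (nat \<Rightarrow> 'a) \<Rightarrow> nat \<Rightarrow> (nat \<Rightarrow> nat) \<Rightarrow> 'a \<Rightarrow> 'a" where
  "sig_pow R x n \<gamma> = fold (\<lambda>i f. f \<circ> (sig R x n i ^^ \<gamma> i)) [0..<n] id"

definition cpair :: "'a::ring_1 set \<Rightarrow> (nat \<Rightarrow> 'a) \<Rightarrow> nat \<Rightarrow> (nat \<Rightarrow> nat) \<Rightarrow> (nat \<Rightarrow> nat) \<Rightarrow> 'a" where
  "cpair R x n \<alpha> \<beta> = coord R x n (mon x n \<alpha> * mon x n \<beta>) (\<lambda>k. \<alpha> k + \<beta> k)"

(* bijective: each sigma_i bijective on R, c_{i,j} invertible in R for i<j;
   c_{i,j} is the coefficient of x_i x_j = x^(e_i+e_j) in x_j x_i *)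
definition bijective_ext :: "'a::ring_1 set \<Rightarrow> (nat \<Rightarrow> 'a) \<Rightarrow> nat \<Rightarrow> bool" where
  "bijective_ext R x n \<longleftrightarrow> (\<forall>i<n. bij_betw (sig R x n i) R R)
     \<and> (\<forall>i j. i < j \<and> j < n \<longrightarrow>
          (\<exists>u\<in>R. u * coord R x n (x j * x i) (\<lambda>k. ei i k + ei j k) = 1
                 \<and> coord R x n (x j * x i) (\<lambda>k. ei i k + ei j k) * u = 1))"

(* Monomials of A^m are pairs (i, alpha) standing for x^alpha e_i.
   The module L = [c_1 X_1 ... c_t X_t] with X_j = x^(beta j) e_(iota j), j < t. *)
definition syzL :: "(nat \<Rightarrow> 'a::ring_1) \<Rightarrow> nat \<Rightarrow> nat \<Rightarrow> nat \<Rightarrow> (nat \<Rightarrow> 'a) \<Rightarrow> (nat \<Rightarrow> nat)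
                    \<Rightarrow> (nat \<Rightarrow> nat \<Rightarrow> nat) \<Rightarrow> (nat \<Rightarrow> 'a) set" where
  "syzL x n m t c \<iota> \<beta> = {h. (\<forall>j\<ge>t. h j = 0) \<and>
      (\<forall>k<m. (\<Sum>j<t. if \<iota> j = k then h j * (c j * mon x n (\<beta> j)) else 0) = 0)}"

(* X_J = lcm of X_j, j in J; None encodes the zero vector *)
definition XJ :: "(nat \<Rightarrow> nat) \<Rightarrow> (nat \<Rightarrow> nat \<Rightarrow> nat) \<Rightarrow> nat set \<Rightarrow> (nat \<times> (nat \<Rightarrow> nat)) option" where
  "XJ \<iota> \<beta> J = (if J \<noteq> {} \<and> (\<forall>j\<in>J. \<forall>j'\<in>J. \<iota> j = \<iota> j')
       then Some (\<iota> (SOME j. j \<in> J), \<lambda>k. Max ((\<lambda>j. \<beta> j k) ` J)) else None)"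

definition mdvd :: "nat \<times> (nat \<Rightarrow> nat) \<Rightarrow> nat \<times> (nat \<Rightarrow> nat) \<Rightarrow> bool" where
  "mdvd X Y \<longleftrightarrow> fst X = fst Y \<and> (\<forall>l. snd X l \<le> snd Y l)"

definition saturated :: "nat \<Rightarrow> (nat \<Rightarrow> nat) \<Rightarrow> (nat \<Rightarrow> nat \<Rightarrow> nat) \<Rightarrow> nat set \<Rightarrow> bool" where
  "saturated t \<iota> \<beta> J \<longleftrightarrow> (\<forall>j<t. \<forall>X. XJ \<iota> \<beta> J = Some X \<longrightarrow> mdvd (\<iota> j, \<beta> j) X \<longrightarrow> j \<in> J)"

definition gam :: "(nat \<Rightarrow> nat \<Rightarrow> nat) \<Rightarrow> (nat \<Rightarrow> nat) \<Rightarrow> nat \<Rightarrow> nat \<Rightarrow> nat" where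
  "gam \<beta> \<delta> j = (\<lambda>k. \<delta> k - \<beta> j k)"

definition syzR :: "'a::ring_1 set \<Rightarrow> (nat \<Rightarrow> 'a) \<Rightarrow> nat \<Rightarrow> (nat \<Rightarrow> 'a) \<Rightarrow> (nat \<Rightarrow> nat \<Rightarrow> nat)
                    \<Rightarrow> (nat \<Rightarrow> nat) \<Rightarrow> nat set \<Rightarrow> (nat \<Rightarrow> 'a) set" where
  "syzR R x n c \<beta> \<delta> J = {b. (\<forall>j\<in>J. b j \<in> R) \<and> (\<forall>j. j \<notin> J \<longrightarrow> b j = 0) \<and>
      (\<Sum>j\<in>J. b j * (sig_pow R x n (gam \<beta> \<delta> j) (c j) * cpair R x n (gam \<beta> \<delta> j) (\<beta> j))) = 0}"

definition vspan :: "'a::ring_1 set \<Rightarrow> (nat \<Rightarrow> 'a) set \<Rightarrow> (nat \<Rightarrow> 'a) set" where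
  "vspan K S = {v. \<exists>F a. finite F \<and> F \<subseteq> S \<and> (\<forall>s\<in>F. a s \<in> K) \<and> v = (\<lambda>j. \<Sum>s\<in>F. a s * s j)}"

definition sJ :: "(nat \<Rightarrow> 'a::ring_1) \<Rightarrow> nat \<Rightarrow> (nat \<Rightarrow> nat \<Rightarrow> nat) \<Rightarrow> (nat \<Rightarrow> nat) \<Rightarrow> nat set
                  \<Rightarrow> (nat \<Rightarrow> 'a) \<Rightarrow> nat \<Rightarrow> 'a" where
  "sJ x n \<beta> \<delta> J b = (\<lambda>j. if j \<in> J then b j * mon x n (gam \<beta> \<delta> j) else 0)"

(* homogeneous of degree X = x^delta e_i: each h_j is a term c x^alpha, and if h_j <> 0
   then lm(lm(h_j) X_j) = x^(alpha + beta_j) e_(iota j) equals X *)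
definition homog :: "'a::ring_1 set \<Rightarrow> (nat \<Rightarrow> 'a) \<Rightarrow> nat \<Rightarrow> nat \<Rightarrow> (nat \<Rightarrow> nat) \<Rightarrow> (nat \<Rightarrow> nat \<Rightarrow> nat)
                     \<Rightarrow> (nat \<Rightarrow> 'a) \<Rightarrow> nat \<times> (nat \<Rightarrow> nat) \<Rightarrow> bool" where
  "homog R x n t \<iota> \<beta> h X \<longleftrightarrow> (\<forall>j<t. \<exists>d \<alpha>. d \<in> R \<and> \<alpha> \<in> expv n \<and> h j = d * mon x n \<alpha> \<and>
       (h j = 0 \<or> (\<iota> j = fst X \<and> (\<lambda>k. \<alpha> k + \<beta> j k) = snd X)))"

end

theory Submission
  imports Defs
begin

text \<open>
  In a quasi-commutative bijective extension the product of two terms is a term: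
  (b x^\<gamma>)(c x^\<beta>) = b \<sigma>^\<gamma>(c) c_{\<gamma>,\<beta>} x^{\<gamma>+\<beta>} with c_{\<gamma>,\<beta>} a unit of R. As distinct monomials
  are R-independent, a vector \<Sum>_{j\<in>J} b_j x^{\<gamma>_j} e_j of degree x^\<delta> e_i is a syzygy exactly
  when \<Sum>_j b_j \<sigma>^{\<gamma>_j}(c_j) c_{\<gamma>_j,\<beta>_j} = 0; this gives the first claim. For the second, a
  syzygy is the sum of its homogeneous components, and each of them is again a syzygy. The
  component of degree x^\<delta> e_i is supported on the saturated set J of all j with X_j | x^\<delta> e_i;
  if X_J = x^{\<delta>'} e_i, it is x^{\<delta>-\<delta>'} times a vector of the same shape and of degree X_J,
  because \<sigma>^{\<delta>-\<delta>'} is bijective and the c_{\<gamma>,\<beta>} are units. The coefficients of that vector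
  form an R-syzygy, hence an R-combination of B^J.
\<close>

lemma fold_comp_right:
  fixes f0 :: "'a \<Rightarrow> 'a"
  shows "fold (\<lambda>i f. f \<circ> h i) ks f0 = f0 \<circ> fold (\<lambda>i f. f \<circ> h i) ks id"
proof (induction ks arbitrary: f0)
  case (Cons k ks)
  have "fold (\<lambda>i f. f \<circ> h i) (k # ks) f0 = (f0 \<circ> h k) \<circ> fold (\<lambda>i f. f \<circ> h i) ks id"
    unfolding List.fold.simps(2) comp_apply[of _ "\<lambda>f. f \<circ> h k"] by (rule Cons)
  also have "\<dots> = f0 \<circ> fold (\<lambda>i f. f \<circ> h i) ks (h k)"
    by (simp only: Cons[of "h k"] comp_assoc)
  finally show ?case by (simp only: List.fold.simps(2) comp_apply[of _ "\<lambda>f. f \<circ> h k"] id_comp)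
qed simp

lemma prod_list_pow_cong:
  "(\<And>k. k \<in> set ks \<Longrightarrow> \<alpha> k = \<alpha>' k) \<Longrightarrow>
     prod_list (map (\<lambda>i. x i ^ \<alpha> i) ks) = prod_list (map (\<lambda>i. x i ^ \<alpha>' i) ks)"
  by (induction ks) auto

lemma prod_list_pow_zero:
  "(\<And>k. k \<in> set ks \<Longrightarrow> \<alpha> k = 0) \<Longrightarrow> prod_list (map (\<lambda>i. x i ^ \<alpha> i) ks) = 1"
  by (induction ks) auto

lemma mon_cong: "(\<And>k. k < n \<Longrightarrow> \<alpha> k = \<alpha>' k) \<Longrightarrow> mon x n \<alpha> = mon x n \<alpha>'"
  unfolding mon_def by (rule prod_list_pow_cong) auto

lemma mon_split:
  assumes "i < n"
  shows "mon x n \<alpha> = prod_list (map (\<lambda>k. x k ^ \<alpha> k) [0..<i]) *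
           (x i ^ \<alpha> i * prod_list (map (\<lambda>k. x k ^ \<alpha> k) [Suc i..<n]))"
proof -
  have "[0..<n] = [0..<i] @ i # [Suc i..<n]"
    using assms upt_add_eq_append[of 0 i "n - i"] upt_conv_Cons by simp
  then show ?thesis unfolding mon_def by simp
qed

lemma mon_ei:
  assumes "i < n"
  shows "mon x n (ei i) = x i"
proof -
  have "prod_list (map (\<lambda>k. x k ^ ei i k) [0..<i]) = 1"
    "prod_list (map (\<lambda>k. x k ^ ei i k) [Suc i..<n]) = 1"
    by (auto simp: ei_def intro!: prod_list_pow_zero)
  then show ?thesis using mon_split[OF assms, of x "ei i"] by (simp add: ei_def)
qed

lemma mon_ei_ei:
  assumes "k < i" "i < n"
  shows "mon x n (\<lambda>l. ei k l + ei i l) = x k * x i"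
proof -
  have "prod_list (map (\<lambda>l. x l ^ (ei k l + ei i l)) [0..<i]) = mon x i (ei k)"
    unfolding mon_def by (rule prod_list_pow_cong) (auto simp: ei_def)
  moreover have "prod_list (map (\<lambda>l. x l ^ (ei k l + ei i l)) [Suc i..<n]) = 1"
    using assms by (auto simp: ei_def intro!: prod_list_pow_zero)
  ultimately show ?thesis
    using assms mon_split[OF assms(2), of x "\<lambda>l. ei k l + ei i l"] mon_ei[OF assms(1), of x]
    by (simp add: ei_def)
qed

lemma ei_expv: "i < n \<Longrightarrow> ei i \<in> expv n"
  by (auto simp: expv_def ei_def)

lemma XJ_eq_Some_iff:
  "XJ \<iota> \<beta> J = Some (i, \<delta>) \<longleftrightarrow>
     J \<noteq> {} \<and> (\<forall>j\<in>J. \<iota> j = i) \<and> \<delta> = (\<lambda>k. Max ((\<lambda>j. \<beta> j k) ` J))"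
proof (cases "J \<noteq> {} \<and> (\<forall>j\<in>J. \<forall>j'\<in>J. \<iota> j = \<iota> j')")
  case True
  define j0 where "j0 = (SOME j. j \<in> J)"
  have "j0 \<in> J" using True by (simp add: j0_def some_in_eq)
  moreover have "XJ \<iota> \<beta> J = Some (\<iota> j0, \<lambda>k. Max ((\<lambda>j. \<beta> j k) ` J))"
    using True unfolding XJ_def j0_def by argo
  ultimately show ?thesis using True by fastforce
next
  case False
  then have "XJ \<iota> \<beta> J = None" unfolding XJ_def by argo
  with False show ?thesis by fastforce
qed

lemma XJ_dvd:
  assumes "finite J" "XJ \<iota> \<beta> J = Some X" "j \<in> J"
  shows "mdvd (\<iota> j, \<beta> j) X"
  using assms XJ_eq_Some_iff[of \<iota> \<beta> J "fst X" "snd X"] by (auto simp: mdvd_def)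

lemma XJ_in_expv:
  assumes "finite J" "XJ \<iota> \<beta> J = Some (i, \<delta>)" "\<And>j. j \<in> J \<Longrightarrow> \<beta> j \<in> expv n"
  shows "\<delta> \<in> expv n"
proof -
  have "J \<noteq> {}" "\<delta> = (\<lambda>k. Max ((\<lambda>j. \<beta> j k) ` J))" using assms(2) XJ_eq_Some_iff by blast+
  moreover have "(\<lambda>j. \<beta> j k) ` J \<subseteq> {0}" if "k \<ge> n" for k
    using assms(3) that by (auto simp: expv_def)
  ultimately show ?thesis using assms(1) by (auto simp: expv_def subset_singleton_iff)
qed

lemma gam_add: "(\<And>k. \<beta> j k \<le> \<delta> k) \<Longrightarrow> (\<lambda>k. gam \<beta> \<delta> j k + \<beta> j k) = \<delta>"
  by (auto simp: gam_def fun_eq_iff)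

lemma gam_in_expv: "\<delta> \<in> expv n \<Longrightarrow> gam \<beta> \<delta> j \<in> expv n"
  by (auto simp: gam_def expv_def)

lemma sJ_lincomb:
  "sJ x n \<beta> \<delta> J (\<lambda>j. \<Sum>v\<in>F. a v * v j) = (\<lambda>j. \<Sum>v\<in>F. a v * sJ x n \<beta> \<delta> J v j)"
  by (auto simp: sJ_def sum_distrib_right mult.assoc)

lemma sJ_cong: "(\<And>j. j \<in> J \<Longrightarrow> b j = b' j) \<Longrightarrow> sJ x n \<beta> \<delta> J b = sJ x n \<beta> \<delta> J b'"
  by (auto simp: sJ_def)

lemma vspan_UNIV_zero: "(\<lambda>_. 0) \<in> vspan UNIV S"
  unfolding vspan_def by (auto intro: exI[of _ "{}"])

lemma vspan_UNIV_base: "s \<in> S \<Longrightarrow> s \<in> vspan UNIV S"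
  unfolding vspan_def by (auto intro!: exI[of _ "{s}"] exI[of _ "\<lambda>_. 1"])

lemma vspan_UNIV_scale:
  assumes "v \<in> vspan UNIV S"
  shows "(\<lambda>j. a * v j) \<in> vspan UNIV S"
proof -
  obtain F b where "finite F" "F \<subseteq> S" "v = (\<lambda>j. \<Sum>s\<in>F. b s * s j)"
    using assms unfolding vspan_def by blast
  then show ?thesis unfolding vspan_def
    by (auto simp: sum_distrib_left mult.assoc intro!: exI[of _ F] exI[of _ "\<lambda>s. a * b s"])
qed

lemma vspan_UNIV_add:
  assumes "v \<in> vspan UNIV S" "w \<in> vspan UNIV S"
  shows "(\<lambda>j. v j + w j) \<in> vspan UNIV S"
proof -
  obtain F a where F: "finite F" "F \<subseteq> S" "v = (\<lambda>j. \<Sum>s\<in>F. a s * s j)"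
    using assms(1) unfolding vspan_def by blast
  obtain G b where G: "finite G" "G \<subseteq> S" "w = (\<lambda>j. \<Sum>s\<in>G. b s * s j)"
    using assms(2) unfolding vspan_def by blast
  let ?a = "\<lambda>s. if s \<in> F then a s else 0" and ?b = "\<lambda>s. if s \<in> G then b s else 0"
  have "(\<Sum>s\<in>F. a s * s j) = (\<Sum>s\<in>F \<union> G. ?a s * s j)"
    "(\<Sum>s\<in>G. b s * s j) = (\<Sum>s\<in>F \<union> G. ?b s * s j)" for j
    using F(1) G(1) by (auto intro!: sum.mono_neutral_cong_left)
  then have "(\<lambda>j. v j + w j) = (\<lambda>j. \<Sum>s\<in>F \<union> G. (?a s + ?b s) * s j)"
    by (simp add: F(3) G(3) sum.distrib distrib_right)
  moreover have "finite (F \<union> G)" "F \<union> G \<subseteq> S" using F G by auto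
  ultimately show ?thesis unfolding vspan_def
    by (intro CollectI exI[of _ "F \<union> G"] exI[of _ "\<lambda>s. ?a s + ?b s"]) simp
qed

lemma vspan_UNIV_lincomb:
  assumes "finite P" "\<And>p. p \<in> P \<Longrightarrow> g p \<in> vspan UNIV S"
  shows "(\<lambda>j. \<Sum>p\<in>P. a p * g p j) \<in> vspan UNIV S"
  using assms
proof (induction P rule: finite_induct)
  case (insert p P)
  then show ?case using vspan_UNIV_add[OF vspan_UNIV_scale[of "g p" S "a p"]] by simp
qed (simp add: vspan_UNIV_zero)

lemma sum_product_if_fst:
  assumes "finite I" "finite D" "i \<in> I"
  shows "(\<Sum>p\<in>I \<times> D. if fst p = i then G (snd p) else 0) = (\<Sum>d\<in>D. G d)"
proof -
  have "(\<Sum>p\<in>I \<times> D. if fst p = i then G (snd p) else 0)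
      = (\<Sum>i'\<in>I. \<Sum>d\<in>D. if i' = i then G d else 0)"
    by (simp add: sum.cartesian_product case_prod_beta)
  also have "\<dots> = (\<Sum>i'\<in>I. if i' = i then (\<Sum>d\<in>D. G d) else 0)"
    by (rule sum.cong) auto
  finally show ?thesis using assms by simp
qed

definition unit_in :: "'a::ring_1 set \<Rightarrow> 'a \<Rightarrow> bool" where
  "unit_in R u \<longleftrightarrow> u \<in> R \<and> (\<exists>v\<in>R. u * v = 1 \<and> v * u = 1)"

lemma unit_in_mult_eq_zero: "unit_in R u \<Longrightarrow> a * u = 0 \<Longrightarrow> a = 0"
  unfolding unit_in_def by (metis mult.assoc mult_1_right mult_zero_left)

locale qc_bijective_pbw =
  fixes R :: "'a::ring_1 set" and x :: "nat \<Rightarrow> 'a" and n :: nat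
  assumes pbw: "sigma_PBW R x n"
    and quasi_comm: "quasi_commutative R x n"
    and bijective: "bijective_ext R x n"
begin

lemma subring_R: "subring R"
  using pbw by (simp add: sigma_PBW_def)

lemma R_zero [simp]: "0 \<in> R" and R_one [simp]: "1 \<in> R"
  using subring_R by (simp_all add: subring_def)

lemma R_add: "a \<in> R \<Longrightarrow> b \<in> R \<Longrightarrow> a + b \<in> R"
  and R_mult: "a \<in> R \<Longrightarrow> b \<in> R \<Longrightarrow> a * b \<in> R"
  using subring_R by (simp_all add: subring_def)

lemma R_sum: "(\<And>s. s \<in> S \<Longrightarrow> f s \<in> R) \<Longrightarrow> sum f S \<in> R"
  by (induction S rule: infinite_finite_induct) (auto intro: R_add)

lemma unique_repr: "\<exists>!f. is_repr R x n f a"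
  using pbw by (simp add: sigma_PBW_def)

lemma coord_is_repr: "is_repr R x n (coord R x n a) a"
  unfolding coord_def using unique_repr by (rule theI')

lemma coord_eqI: "is_repr R x n f a \<Longrightarrow> coord R x n a = f"
  unfolding coord_def using unique_repr by (rule the1_equality)

lemma coord_in_R: "coord R x n a \<alpha> \<in> R"
  using coord_is_repr by (simp add: is_repr_def)

lemma coord_lincomb:
  assumes "finite D" "D \<subseteq> expv n" "\<And>\<delta>. \<delta> \<in> D \<Longrightarrow> s \<delta> \<in> R"
  shows "coord R x n (\<Sum>\<delta>\<in>D. s \<delta> * mon x n \<delta>) = (\<lambda>\<delta>. if \<delta> \<in> D then s \<delta> else 0)"
proof (rule coord_eqI)
  let ?f = "\<lambda>\<delta>. if \<delta> \<in> D then s \<delta> else 0"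
  have supp: "{\<alpha>. ?f \<alpha> \<noteq> 0} \<subseteq> D" by auto
  have "(\<Sum>\<alpha>\<in>{\<alpha>. ?f \<alpha> \<noteq> 0}. ?f \<alpha> * mon x n \<alpha>) = (\<Sum>\<delta>\<in>D. ?f \<delta> * mon x n \<delta>)"
    by (rule sum.mono_neutral_left) (use assms supp in auto)
  also have "\<dots> = (\<Sum>\<delta>\<in>D. s \<delta> * mon x n \<delta>)" by (rule sum.cong) auto
  finally show "is_repr R x n ?f (\<Sum>\<delta>\<in>D. s \<delta> * mon x n \<delta>)"
    unfolding is_repr_def using assms supp finite_subset[OF supp] by auto
qed

lemma coord_zero: "coord R x n 0 = (\<lambda>_. 0)"
  using coord_lincomb[of "{}"] by simp

lemma coord_term: "\<alpha> \<in> expv n \<Longrightarrow> r \<in> R \<Longrightarrow> coord R x n (r * mon x n \<alpha>) \<alpha> = r"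
  using coord_lincomb[of "{\<alpha>}" "\<lambda>_. r"] by simp

lemma lincomb_mon_eq_zeroD:
  assumes "finite D" "D \<subseteq> expv n" "\<And>\<delta>. \<delta> \<in> D \<Longrightarrow> s \<delta> \<in> R"
    and "(\<Sum>\<delta>\<in>D. s \<delta> * mon x n \<delta>) = 0" "\<delta> \<in> D"
  shows "s \<delta> = 0"
proof -
  have "s \<delta> = coord R x n (\<Sum>\<delta>\<in>D. s \<delta> * mon x n \<delta>) \<delta>"
    using coord_lincomb[OF assms(1-3)] assms(5) by simp
  then show ?thesis using assms(4) coord_zero by simp
qed

lemma sum_shifted_terms:
  fixes \<beta>0 :: "nat \<Rightarrow> nat"
  assumes "finite D" "(\<lambda>\<alpha> k. \<alpha> k + \<beta>0 k) ` {\<alpha>. coord R x n a \<alpha> \<noteq> 0} \<subseteq> D"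
  shows "(\<Sum>\<delta>\<in>D. if \<forall>k. \<beta>0 k \<le> \<delta> k
            then coord R x n a (\<lambda>k. \<delta> k - \<beta>0 k) * mon x n (\<lambda>k. \<delta> k - \<beta>0 k) else 0) = a"
    (is "(\<Sum>\<delta>\<in>D. ?G \<delta>) = a")
proof -
  let ?S = "{\<alpha>. coord R x n a \<alpha> \<noteq> 0}" and ?shift = "\<lambda>\<alpha> k. \<alpha> k + \<beta>0 k"
  have "?G \<delta> = 0" if "\<delta> \<in> D - ?shift ` ?S" for \<delta>
  proof (cases "\<forall>k. \<beta>0 k \<le> \<delta> k")
    case True
    then have shift: "?shift (\<lambda>k. \<delta> k - \<beta>0 k) = \<delta>" by (simp add: fun_eq_iff)
    have "(\<lambda>k. \<delta> k - \<beta>0 k) \<notin> ?S"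
    proof
      assume "(\<lambda>k. \<delta> k - \<beta>0 k) \<in> ?S"
      then have "?shift (\<lambda>k. \<delta> k - \<beta>0 k) \<in> ?shift ` ?S" by (rule imageI)
      then show False using that by (simp only: shift) blast
    qed
    then show ?thesis by simp
  next
    case False
    then show ?thesis by (simp only: if_not_P if_False)
  qed
  then have "(\<Sum>\<delta>\<in>D. ?G \<delta>) = (\<Sum>\<delta>\<in>?shift ` ?S. ?G \<delta>)"
    using assms by (intro sum.mono_neutral_right) auto
  also have "\<dots> = (\<Sum>\<alpha>\<in>?S. ?G (?shift \<alpha>))"
    by (rule sum.reindex_cong[where l = ?shift]) (simp_all add: inj_on_def fun_eq_iff)
  also have "\<dots> = (\<Sum>\<alpha>\<in>?S. coord R x n a \<alpha> * mon x n \<alpha>)"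
    by (rule sum.cong) simp_all
  also have "\<dots> = a" using coord_is_repr[of a] by (simp add: is_repr_def)
  finally show ?thesis .
qed

lemma mon_right_cancel:
  assumes "\<alpha> \<in> expv n" "r \<in> R" "r' \<in> R" "r * mon x n \<alpha> = r' * mon x n \<alpha>"
  shows "r = r'"
  using coord_term[OF assms(1,2)] coord_term[OF assms(1,3)] assms(4) by metis

lemma sig_in_R_and_x_mult_eq:
  assumes "i < n" "r \<in> R"
  shows "sig R x n i r \<in> R \<and> x i * r = sig R x n i r * x i"
proof (cases "r = 0")
  case True
  then show ?thesis by (simp add: sig_def coord_zero)
next
  case False
  then obtain c where c: "c \<in> R" "x i * r = c * x i"
    using quasi_comm assms unfolding quasi_commutative_def by blast
  have "sig R x n i r = c"
    using coord_term[OF ei_expv[OF assms(1)] c(1)] mon_ei[OF assms(1), of x] c(2)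
    by (simp add: sig_def)
  then show ?thesis using c by simp
qed

lemma sig_in_R: "i < n \<Longrightarrow> r \<in> R \<Longrightarrow> sig R x n i r \<in> R"
  and x_mult_eq: "i < n \<Longrightarrow> r \<in> R \<Longrightarrow> x i * r = sig R x n i r * x i"
  using sig_in_R_and_x_mult_eq by blast+

lemma x_right_cancel: "i < n \<Longrightarrow> a \<in> R \<Longrightarrow> b \<in> R \<Longrightarrow> a * x i = b * x i \<Longrightarrow> a = b"
  using mon_right_cancel[OF ei_expv, of i a b] mon_ei[of i n x] by simp

lemma sig_mult:
  assumes "i < n" "a \<in> R" "b \<in> R"
  shows "sig R x n i (a * b) = sig R x n i a * sig R x n i b"
proof (rule x_right_cancel[OF assms(1)])
  have "sig R x n i (a * b) * x i = (x i * a) * b"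
    using x_mult_eq[OF assms(1) R_mult[OF assms(2,3)]] by (simp add: mult.assoc)
  also have "\<dots> = (sig R x n i a * sig R x n i b) * x i"
    using x_mult_eq[OF assms(1,2)] x_mult_eq[OF assms(1,3)] by (simp add: mult.assoc)
  finally show "sig R x n i (a * b) * x i = (sig R x n i a * sig R x n i b) * x i" .
next
  show "sig R x n i (a * b) \<in> R" by (rule sig_in_R[OF assms(1) R_mult[OF assms(2,3)]])
  show "sig R x n i a * sig R x n i b \<in> R" by (rule R_mult[OF sig_in_R sig_in_R]) (use assms in auto)
qed

lemma sig_one:
  assumes "i < n"
  shows "sig R x n i 1 = 1"
proof (rule x_right_cancel[OF assms sig_in_R[OF assms R_one] R_one])
  show "sig R x n i 1 * x i = 1 * x i"
    using x_mult_eq[OF assms R_one] by simp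
qed

lemma sig_zero: "sig R x n i 0 = 0"
  by (simp add: sig_def coord_zero)

lemma unit_in_R: "unit_in R u \<Longrightarrow> u \<in> R"
  by (simp add: unit_in_def)

lemma unit_in_one: "unit_in R 1"
  by (auto simp: unit_in_def intro: bexI[of _ 1])

lemma unit_in_mult:
  assumes "unit_in R u" "unit_in R v"
  shows "unit_in R (u * v)"
proof -
  obtain u' v' where inv: "u' \<in> R" "v' \<in> R" "u * u' = 1" "u' * u = 1" "v * v' = 1" "v' * v = 1"
    using assms unfolding unit_in_def by blast
  have "(u * v) * (v' * u') = u * (v * v') * u'" "(v' * u') * (u * v) = v' * (u' * u) * v"
    by (simp_all add: mult.assoc)
  then show ?thesis
    using assms inv R_mult unit_in_R unfolding unit_in_def by (metis mult_1 mult_1_right)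
qed

lemma unit_in_sig:
  assumes "i < n" "unit_in R u"
  shows "unit_in R (sig R x n i u)"
proof -
  obtain u' where inv: "u' \<in> R" "u * u' = 1" "u' * u = 1" "u \<in> R"
    using assms(2) unfolding unit_in_def by blast
  then have "sig R x n i u * sig R x n i u' = 1" "sig R x n i u' * sig R x n i u = 1"
    using sig_mult[OF assms(1)] sig_one[OF assms(1)] by metis+
  then show ?thesis using sig_in_R[OF assms(1)] inv unfolding unit_in_def by blast
qed

lemma unit_in_sig_funpow: "i < n \<Longrightarrow> unit_in R u \<Longrightarrow> unit_in R ((sig R x n i ^^ g) u)"
  by (induction g) (auto simp: unit_in_sig)

lemma x_pow_mult_eq:
  assumes "i < n" "r \<in> R"
  shows "(sig R x n i ^^ g) r \<in> R \<and> x i ^ g * r = (sig R x n i ^^ g) r * x i ^ g"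
proof (induction g)
  case (Suc g)
  let ?s = "(sig R x n i ^^ g) r"
  have "x i ^ Suc g * r = (x i * ?s) * x i ^ g"
    using Suc by (simp add: mult.assoc)
  also have "\<dots> = sig R x n i ?s * x i ^ Suc g"
    using x_mult_eq[OF assms(1)] Suc by (simp add: mult.assoc)
  finally show ?case using sig_in_R[OF assms(1)] Suc by simp
qed (use assms in simp)

definition sig_fold :: "nat list \<Rightarrow> (nat \<Rightarrow> nat) \<Rightarrow> 'a \<Rightarrow> 'a" where
  "sig_fold ks \<gamma> = fold (\<lambda>i f. f \<circ> (sig R x n i ^^ \<gamma> i)) ks id"

lemma sig_fold_Cons: "sig_fold (k # ks) \<gamma> = (sig R x n k ^^ \<gamma> k) \<circ> sig_fold ks \<gamma>"
  using fold_comp_right[of "\<lambda>i. sig R x n i ^^ \<gamma> i" ks "sig R x n k ^^ \<gamma> k"]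
  by (simp add: sig_fold_def)

lemma prod_x_pow_mult_eq:
  assumes "set ks \<subseteq> {..<n}" "r \<in> R"
  shows "sig_fold ks \<gamma> r \<in> R \<and>
    prod_list (map (\<lambda>i. x i ^ \<gamma> i) ks) * r = sig_fold ks \<gamma> r * prod_list (map (\<lambda>i. x i ^ \<gamma> i) ks)"
  using assms(1)
proof (induction ks)
  case (Cons k ks)
  let ?s = "sig_fold ks \<gamma> r" and ?P = "prod_list (map (\<lambda>i. x i ^ \<gamma> i) ks)"
  have k: "k < n" and IH: "?s \<in> R \<and> ?P * r = ?s * ?P" using Cons by auto
  have "prod_list (map (\<lambda>i. x i ^ \<gamma> i) (k # ks)) * r = (x k ^ \<gamma> k * ?s) * ?P"
    using IH by (simp add: mult.assoc)
  also have "\<dots> = (sig R x n k ^^ \<gamma> k) ?s * prod_list (map (\<lambda>i. x i ^ \<gamma> i) (k # ks))"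
    using x_pow_mult_eq[OF k, of ?s] IH by (simp add: mult.assoc)
  finally show ?case using x_pow_mult_eq[OF k, of ?s] IH by (simp add: sig_fold_Cons)
qed (use assms in \<open>simp add: sig_fold_def\<close>)

lemma sig_pow_eq_sig_fold: "sig_pow R x n \<gamma> = sig_fold [0..<n] \<gamma>"
  by (simp add: sig_pow_def sig_fold_def)

lemma sig_pow_in_R: "r \<in> R \<Longrightarrow> sig_pow R x n \<gamma> r \<in> R"
  and mon_mult_eq: "r \<in> R \<Longrightarrow> mon x n \<gamma> * r = sig_pow R x n \<gamma> r * mon x n \<gamma>"
  using prod_x_pow_mult_eq[of "[0..<n]" r \<gamma>] by (auto simp: sig_pow_eq_sig_fold mon_def atLeast0LessThan)

lemma sig_pow_zero: "sig_pow R x n \<gamma> 0 = 0"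
proof -
  have "sig_fold ks \<gamma> 0 = 0" for ks
  proof (induction ks)
    case (Cons k ks)
    have "(sig R x n k ^^ g) 0 = 0" for g by (induction g) (simp_all add: sig_zero)
    with Cons show ?case by (simp add: sig_fold_Cons)
  qed (simp add: sig_fold_def)
  then show ?thesis by (simp add: sig_pow_eq_sig_fold)
qed

lemma sig_pow_bij: "bij_betw (sig_pow R x n \<gamma>) R R"
proof -
  have "bij_betw (sig_fold ks \<gamma>) R R" if "set ks \<subseteq> {..<n}" for ks
    using that
  proof (induction ks)
    case (Cons k ks)
    have "bij_betw (sig R x n k) R R" using bijective Cons.prems unfolding bijective_ext_def by auto
    then have "bij_betw (sig R x n k ^^ \<gamma> k) R R" by (rule bij_betw_funpow)
    with Cons show ?case unfolding sig_fold_Cons by (metis bij_betw_trans insert_subset list.set(2))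
  qed (simp add: sig_fold_def bij_betw_def)
  then show ?thesis by (simp add: sig_pow_eq_sig_fold atLeast0LessThan)
qed

lemma sig_pow_eq_zero_iff: "r \<in> R \<Longrightarrow> sig_pow R x n \<theta> r = 0 \<longleftrightarrow> r = 0"
  using sig_pow_bij[of \<theta>] sig_pow_zero[of \<theta>] unfolding bij_betw_def inj_on_def by force

definition unit_assoc :: "'a \<Rightarrow> 'a \<Rightarrow> bool" where
  "unit_assoc a b \<longleftrightarrow> (\<exists>u. unit_in R u \<and> a = u * b)"

lemma unit_assoc_refl: "unit_assoc a a"
  unfolding unit_assoc_def using unit_in_one by force

lemma unit_assoc_trans [trans]: "unit_assoc a b \<Longrightarrow> unit_assoc b c \<Longrightarrow> unit_assoc a c"
  unfolding unit_assoc_def by (metis unit_in_mult mult.assoc)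

lemma unit_assoc_mult_right: "unit_assoc a b \<Longrightarrow> unit_assoc (a * c) (b * c)"
  unfolding unit_assoc_def by (metis mult.assoc)

lemma unit_assoc_x_pow_mult_left:
  assumes "k < n" "unit_assoc a b"
  shows "unit_assoc (x k ^ g * a) (x k ^ g * b)"
proof -
  obtain u where u: "unit_in R u" "a = u * b" using assms(2) unfolding unit_assoc_def by blast
  have "x k ^ g * a = (sig R x n k ^^ g) u * (x k ^ g * b)"
    using x_pow_mult_eq[OF assms(1) unit_in_R[OF u(1)], of g] u(2) by (simp add: mult.assoc[symmetric])
  then show ?thesis using unit_in_sig_funpow[OF assms(1) u(1)] unfolding unit_assoc_def by blast
qed

lemma x_swap:
  assumes "k < i" "i < n"
  shows "unit_assoc (x i * x k) (x k * x i)"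
proof -
  obtain c where c: "c \<in> R" "x i * x k = c * x k * x i"
    using quasi_comm assms unfolding quasi_commutative_def by (meson DiffD1 order.strict_trans)
  have "(\<lambda>l. ei k l + ei i l) \<in> expv n" using assms by (auto simp: expv_def ei_def)
  then have "coord R x n (x i * x k) (\<lambda>l. ei k l + ei i l) = c"
    using coord_term[of _ c] c mon_ei_ei[OF assms, of x] by (metis mult.assoc)
  moreover obtain v where "v \<in> R" "v * coord R x n (x i * x k) (\<lambda>l. ei k l + ei i l) = 1"
    "coord R x n (x i * x k) (\<lambda>l. ei k l + ei i l) * v = 1"
    using bijective assms unfolding bijective_ext_def by blast
  ultimately have "unit_in R c"
    using c(1) unfolding unit_in_def by auto
  then show ?thesis using c(2) unfolding unit_assoc_def by (auto simp: mult.assoc)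
qed

lemma x_swap_pow:
  assumes "k < i" "i < n"
  shows "unit_assoc (x i * x k ^ g) (x k ^ g * x i)"
proof (induction g)
  case 0
  show ?case by (simp add: unit_assoc_refl)
next
  case (Suc g)
  have "x i * x k ^ Suc g = (x i * x k ^ g) * x k" by (simp add: power_Suc2 mult.assoc del: power_Suc)
  also have "unit_assoc \<dots> ((x k ^ g * x i) * x k)" by (rule unit_assoc_mult_right[OF Suc])
  also have "(x k ^ g * x i) * x k = x k ^ g * (x i * x k)" by (simp add: mult.assoc)
  also have "unit_assoc \<dots> (x k ^ g * (x k * x i))"
    using assms by (intro unit_assoc_x_pow_mult_left x_swap) auto
  also have "x k ^ g * (x k * x i) = x k ^ Suc g * x i" by (simp add: power_Suc2 mult.assoc del: power_Suc)
  finally show ?case .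
qed

lemma x_swap_prod:
  assumes "set ks \<subseteq> {..<i}" "i < n"
  shows "unit_assoc (x i * prod_list (map (\<lambda>k. x k ^ \<gamma> k) ks))
                    (prod_list (map (\<lambda>k. x k ^ \<gamma> k) ks) * x i)"
  using assms(1)
proof (induction ks)
  case Nil
  show ?case by (simp add: unit_assoc_refl)
next
  case (Cons k ks)
  let ?P = "prod_list (map (\<lambda>k. x k ^ \<gamma> k) ks)"
  have k: "k < i" "k < n" using Cons.prems assms(2) by auto
  have "x i * prod_list (map (\<lambda>k. x k ^ \<gamma> k) (k # ks)) = (x i * x k ^ \<gamma> k) * ?P"
    by (simp add: mult.assoc)
  also have "unit_assoc \<dots> ((x k ^ \<gamma> k * x i) * ?P)"
    by (rule unit_assoc_mult_right[OF x_swap_pow[OF k(1) assms(2)]])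
  also have "(x k ^ \<gamma> k * x i) * ?P = x k ^ \<gamma> k * (x i * ?P)" by (simp add: mult.assoc)
  also have "unit_assoc \<dots> (x k ^ \<gamma> k * (?P * x i))"
    using Cons by (intro unit_assoc_x_pow_mult_left[OF k(2)]) auto
  also have "x k ^ \<gamma> k * (?P * x i) = prod_list (map (\<lambda>k. x k ^ \<gamma> k) (k # ks)) * x i"
    by (simp add: mult.assoc)
  finally show ?case .
qed

lemma x_mult_mon:
  assumes "i < n"
  shows "unit_assoc (x i * mon x n \<gamma>) (mon x n (\<gamma>(i := Suc (\<gamma> i))))"
proof -
  let ?L = "\<lambda>\<gamma>. prod_list (map (\<lambda>k. x k ^ \<gamma> k) [0..<i])"
    and ?U = "\<lambda>\<gamma>. prod_list (map (\<lambda>k. x k ^ \<gamma> k) [Suc i..<n])"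
  have L: "?L (\<gamma>(i := Suc (\<gamma> i))) = ?L \<gamma>" and U: "?U (\<gamma>(i := Suc (\<gamma> i))) = ?U \<gamma>"
    by (auto intro: prod_list_pow_cong)
  have "x i * mon x n \<gamma> = (x i * ?L \<gamma>) * (x i ^ \<gamma> i * ?U \<gamma>)"
    using mon_split[OF assms, of x \<gamma>] by (simp add: mult.assoc)
  also have "unit_assoc \<dots> ((?L \<gamma> * x i) * (x i ^ \<gamma> i * ?U \<gamma>))"
    using assms by (intro unit_assoc_mult_right x_swap_prod) auto
  also have "(?L \<gamma> * x i) * (x i ^ \<gamma> i * ?U \<gamma>) = mon x n (\<gamma>(i := Suc (\<gamma> i)))"
    using mon_split[OF assms, of x "\<gamma>(i := Suc (\<gamma> i))"] L U by (simp add: mult.assoc)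
  finally show ?thesis .
qed

lemma x_pow_mult_mon:
  assumes "k < n"
  shows "unit_assoc (x k ^ g * mon x n \<gamma>) (mon x n (\<gamma>(k := \<gamma> k + g)))"
proof (induction g)
  case 0
  show ?case by (simp add: unit_assoc_refl)
next
  case (Suc g)
  have "x k ^ Suc g * mon x n \<gamma> = x k ^ 1 * (x k ^ g * mon x n \<gamma>)" by (simp add: mult.assoc)
  also have "unit_assoc \<dots> (x k ^ 1 * mon x n (\<gamma>(k := \<gamma> k + g)))"
    by (rule unit_assoc_x_pow_mult_left[OF assms Suc])
  also have "unit_assoc \<dots> (mon x n (\<gamma>(k := \<gamma> k + Suc g)))"
    using x_mult_mon[OF assms, of "\<gamma>(k := \<gamma> k + g)"] by simp
  finally show ?case .
qed

lemma prod_mult_mon: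
  assumes "set ks \<subseteq> {..<n}" "distinct ks"
  shows "unit_assoc (prod_list (map (\<lambda>k. x k ^ \<alpha> k) ks) * mon x n \<beta>)
                    (mon x n (\<lambda>k. \<beta> k + (if k \<in> set ks then \<alpha> k else 0)))"
  using assms
proof (induction ks)
  case Nil
  show ?case by (simp add: unit_assoc_refl)
next
  case (Cons k ks)
  let ?\<beta> = "\<lambda>l. \<beta> l + (if l \<in> set ks then \<alpha> l else 0)"
  have k: "k < n" using Cons.prems by simp
  have "prod_list (map (\<lambda>k. x k ^ \<alpha> k) (k # ks)) * mon x n \<beta>
      = x k ^ \<alpha> k * (prod_list (map (\<lambda>k. x k ^ \<alpha> k) ks) * mon x n \<beta>)"
    by (simp add: mult.assoc)
  also have "unit_assoc \<dots> (x k ^ \<alpha> k * mon x n ?\<beta>)"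
    using Cons by (intro unit_assoc_x_pow_mult_left[OF k]) auto
  also have "unit_assoc \<dots> (mon x n (?\<beta>(k := ?\<beta> k + \<alpha> k)))"
    by (rule x_pow_mult_mon[OF k])
  also have "?\<beta>(k := ?\<beta> k + \<alpha> k) = (\<lambda>l. \<beta> l + (if l \<in> set (k # ks) then \<alpha> l else 0))"
    using Cons.prems by (auto simp: fun_eq_iff)
  finally show ?case .
qed

lemma mon_mult_mon: "unit_assoc (mon x n \<alpha> * mon x n \<beta>) (mon x n (\<lambda>k. \<alpha> k + \<beta> k))"
proof -
  have "unit_assoc (mon x n \<alpha> * mon x n \<beta>)
                   (mon x n (\<lambda>k. \<beta> k + (if k \<in> set [0..<n] then \<alpha> k else 0)))"
    unfolding mon_def[of x n \<alpha>] by (rule prod_mult_mon) auto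
  also have "mon x n (\<lambda>k. \<beta> k + (if k \<in> set [0..<n] then \<alpha> k else 0)) = mon x n (\<lambda>k. \<alpha> k + \<beta> k)"
    by (rule mon_cong) auto
  finally show ?thesis .
qed

lemma cpair_unit_and_mon_mult_mon:
  assumes "\<alpha> \<in> expv n" "\<beta> \<in> expv n"
  shows "unit_in R (cpair R x n \<alpha> \<beta>)
    \<and> mon x n \<alpha> * mon x n \<beta> = cpair R x n \<alpha> \<beta> * mon x n (\<lambda>k. \<alpha> k + \<beta> k)"
proof -
  obtain u where u: "unit_in R u" "mon x n \<alpha> * mon x n \<beta> = u * mon x n (\<lambda>k. \<alpha> k + \<beta> k)"
    using mon_mult_mon unfolding unit_assoc_def by blast
  have "(\<lambda>k. \<alpha> k + \<beta> k) \<in> expv n" using assms by (auto simp: expv_def)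
  then have "cpair R x n \<alpha> \<beta> = u"
    unfolding cpair_def u(2) using coord_term unit_in_R[OF u(1)] by blast
  then show ?thesis using u by simp
qed

lemma unit_in_cpair: "\<alpha> \<in> expv n \<Longrightarrow> \<beta> \<in> expv n \<Longrightarrow> unit_in R (cpair R x n \<alpha> \<beta>)"
  and mon_mult_mon_cpair: "\<alpha> \<in> expv n \<Longrightarrow> \<beta> \<in> expv n \<Longrightarrow>
    mon x n \<alpha> * mon x n \<beta> = cpair R x n \<alpha> \<beta> * mon x n (\<lambda>k. \<alpha> k + \<beta> k)"
  using cpair_unit_and_mon_mult_mon by blast+

lemma cpair_in_R: "\<alpha> \<in> expv n \<Longrightarrow> \<beta> \<in> expv n \<Longrightarrow> cpair R x n \<alpha> \<beta> \<in> R"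
  using unit_in_cpair unit_in_R by blast

lemma term_mult_term:
  assumes "b \<in> R" "c \<in> R" "\<gamma> \<in> expv n" "\<beta> \<in> expv n"
  shows "(b * mon x n \<gamma>) * (c * mon x n \<beta>)
    = (b * (sig_pow R x n \<gamma> c * cpair R x n \<gamma> \<beta>)) * mon x n (\<lambda>k. \<gamma> k + \<beta> k)"
proof -
  have "(b * mon x n \<gamma>) * (c * mon x n \<beta>) = b * (mon x n \<gamma> * c) * mon x n \<beta>"
    by (simp only: mult.assoc)
  also have "\<dots> = b * sig_pow R x n \<gamma> c * (mon x n \<gamma> * mon x n \<beta>)"
    by (simp only: mon_mult_eq[OF assms(2), of \<gamma>] mult.assoc)
  finally show ?thesis by (simp only: mon_mult_mon_cpair[OF assms(3,4)] mult.assoc)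
qed

lemma sig_pow_solve:
  assumes "r \<in> R" "unit_in R u"
  obtains b where "b \<in> R" "sig_pow R x n \<theta> b * u = r"
proof -
  obtain v where v: "v \<in> R" "v * u = 1" using assms(2) unfolding unit_in_def by blast
  have "sig_pow R x n \<theta> ` R = R" using sig_pow_bij by (simp add: bij_betw_def)
  then obtain b where b: "b \<in> R" "sig_pow R x n \<theta> b = r * v"
    using R_mult[OF assms(1) v(1)] by (metis imageE)
  have "sig_pow R x n \<theta> b * u = r * (v * u)" by (simp only: b(2) mult.assoc)
  then show ?thesis using that b(1) v(2) by simp
qed

end

locale monomial_row = qc_bijective_pbw +
  fixes m t :: nat and c :: "nat \<Rightarrow> 'a" and \<iota> :: "nat \<Rightarrow> nat" and \<beta> :: "nat \<Rightarrow> nat \<Rightarrow> nat"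
  assumes c_in_R: "j < t \<Longrightarrow> c j \<in> R"
    and row_index_less: "j < t \<Longrightarrow> \<iota> j < m"
    and exponent_in_expv: "j < t \<Longrightarrow> \<beta> j \<in> expv n"
begin

definition row_sum :: "(nat \<Rightarrow> 'a) \<Rightarrow> nat \<Rightarrow> 'a" where
  "row_sum h k = (\<Sum>j<t. if \<iota> j = k then h j * (c j * mon x n (\<beta> j)) else 0)"

lemma syzL_iff: "h \<in> syzL x n m t c \<iota> \<beta> \<longleftrightarrow> (\<forall>j\<ge>t. h j = 0) \<and> (\<forall>k<m. row_sum h k = 0)"
  by (simp add: syzL_def row_sum_def)

lemma row_sum_lincomb:
  "row_sum (\<lambda>j. \<Sum>p\<in>P. a p * g p j) k = (\<Sum>p\<in>P. a p * row_sum (g p) k)"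
proof -
  have "row_sum (\<lambda>j. \<Sum>p\<in>P. a p * g p j) k
      = (\<Sum>j<t. \<Sum>p\<in>P. a p * (if \<iota> j = k then g p j * (c j * mon x n (\<beta> j)) else 0))"
    unfolding row_sum_def by (rule sum.cong) (auto simp: sum_distrib_right mult.assoc)
  also have "\<dots> = (\<Sum>p\<in>P. a p * row_sum (g p) k)"
    unfolding row_sum_def by (subst sum.swap) (simp add: sum_distrib_left)
  finally show ?thesis .
qed

lemma row_sum_scale: "row_sum (\<lambda>j. a * g j) k = a * row_sum g k"
  using row_sum_lincomb[where P = "{()}" and a = "\<lambda>_. a" and g = "\<lambda>_. g"] by simp

lemma row_sum_sum: "row_sum (\<lambda>j. \<Sum>p\<in>P. g p j) k = (\<Sum>p\<in>P. row_sum (g p) k)"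
  using row_sum_lincomb[where a = "\<lambda>_. 1"] by simp

lemma syzL_lincomb:
  assumes "\<And>p. p \<in> P \<Longrightarrow> g p \<in> syzL x n m t c \<iota> \<beta>"
  shows "(\<lambda>j. \<Sum>p\<in>P. a p * g p j) \<in> syzL x n m t c \<iota> \<beta>"
  using assms by (simp add: syzL_iff row_sum_lincomb)

definition syz_sum :: "(nat \<Rightarrow> nat) \<Rightarrow> nat set \<Rightarrow> (nat \<Rightarrow> 'a) \<Rightarrow> 'a" where
  "syz_sum \<delta> J b = (\<Sum>j\<in>J. b j * (sig_pow R x n (gam \<beta> \<delta> j) (c j) * cpair R x n (gam \<beta> \<delta> j) (\<beta> j)))"

lemma syzR_iff:
  "b \<in> syzR R x n c \<beta> \<delta> J \<longleftrightarrow> (\<forall>j\<in>J. b j \<in> R) \<and> (\<forall>j. j \<notin> J \<longrightarrow> b j = 0) \<and> syz_sum \<delta> J b = 0"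
  by (simp add: syzR_def syz_sum_def)

lemma row_sum_sJ:
  assumes "J \<subseteq> {..<t}" "\<And>j. j \<in> J \<Longrightarrow> mdvd (\<iota> j, \<beta> j) (i, \<delta>)" "\<delta> \<in> expv n"
    and "\<And>j. j \<in> J \<Longrightarrow> b j \<in> R"
  shows "row_sum (sJ x n \<beta> \<delta> J b) k = (if k = i then syz_sum \<delta> J b * mon x n \<delta> else 0)"
proof -
  have summand: "(b j * mon x n (gam \<beta> \<delta> j)) * (c j * mon x n (\<beta> j))
      = b j * (sig_pow R x n (gam \<beta> \<delta> j) (c j) * cpair R x n (gam \<beta> \<delta> j) (\<beta> j)) * mon x n \<delta>"
    if "j \<in> J" for j
    using term_mult_term[of "b j" "c j"] gam_add[of \<beta> j \<delta>] assms that
      c_in_R exponent_in_expv gam_in_expv by (auto simp: mdvd_def)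
  have "row_sum (sJ x n \<beta> \<delta> J b) k
      = (\<Sum>j\<in>J. if \<iota> j = k then (b j * mon x n (gam \<beta> \<delta> j)) * (c j * mon x n (\<beta> j)) else 0)"
    unfolding row_sum_def
    by (rule sum.mono_neutral_cong_right) (use assms(1) in \<open>auto simp: sJ_def\<close>)
  also have "\<dots> = (\<Sum>j\<in>J. if k = i then b j * (sig_pow R x n (gam \<beta> \<delta> j) (c j)
                      * cpair R x n (gam \<beta> \<delta> j) (\<beta> j)) * mon x n \<delta> else 0)"
    by (rule sum.cong) (use assms(2) summand in \<open>auto simp: mdvd_def\<close>)
  finally show ?thesis by (simp add: syz_sum_def sum_distrib_right)
qed

lemma sJ_in_syzL:
  assumes "J \<subseteq> {..<t}" "\<And>j. j \<in> J \<Longrightarrow> mdvd (\<iota> j, \<beta> j) (i, \<delta>)" "\<delta> \<in> expv n"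
    and "\<And>j. j \<in> J \<Longrightarrow> b j \<in> R" "syz_sum \<delta> J b = 0"
  shows "sJ x n \<beta> \<delta> J b \<in> syzL x n m t c \<iota> \<beta>"
proof -
  have "sJ x n \<beta> \<delta> J b j = 0" if "j \<ge> t" for j
    using assms(1) that unfolding sJ_def by auto
  moreover have "row_sum (sJ x n \<beta> \<delta> J b) k = 0" for k
    using row_sum_sJ[OF assms(1-4), where k = k] assms(5) by simp
  ultimately show ?thesis by (simp add: syzL_iff)
qed

lemma sJ_homog:
  assumes "J \<subseteq> {..<t}" "\<And>j. j \<in> J \<Longrightarrow> mdvd (\<iota> j, \<beta> j) (i, \<delta>)" "\<delta> \<in> expv n"
    and "\<And>j. j \<in> J \<Longrightarrow> b j \<in> R"
  shows "homog R x n t \<iota> \<beta> (sJ x n \<beta> \<delta> J b) (i, \<delta>)"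
  unfolding homog_def
proof (intro allI impI)
  fix j assume "j < t"
  show "\<exists>d \<alpha>. d \<in> R \<and> \<alpha> \<in> expv n \<and> sJ x n \<beta> \<delta> J b j = d * mon x n \<alpha> \<and>
          (sJ x n \<beta> \<delta> J b j = 0 \<or> \<iota> j = fst (i, \<delta>) \<and> (\<lambda>k. \<alpha> k + \<beta> j k) = snd (i, \<delta>))"
  proof (cases "j \<in> J")
    case True
    then have "\<iota> j = i" "(\<lambda>k. gam \<beta> \<delta> j k + \<beta> j k) = \<delta>"
      using assms(2) gam_add[of \<beta> j \<delta>] by (auto simp: mdvd_def)
    moreover have "sJ x n \<beta> \<delta> J b j = b j * mon x n (gam \<beta> \<delta> j)"
      using True by (simp add: sJ_def)
    ultimately show ?thesis using True assms(4) gam_in_expv[OF assms(3)]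
      by (intro exI[of _ "b j"] exI[of _ "gam \<beta> \<delta> j"]) auto
  next
    case False
    then show ?thesis using assms(3) by (intro exI[of _ 0] exI[of _ \<delta>]) (simp add: sJ_def)
  qed
qed

lemma sJ_syzygy_and_homog:
  assumes "J \<subseteq> {..<t}" "XJ \<iota> \<beta> J = Some (i, \<delta>)" "b \<in> syzR R x n c \<beta> \<delta> J"
  shows "sJ x n \<beta> \<delta> J b \<in> syzL x n m t c \<iota> \<beta> \<and> homog R x n t \<iota> \<beta> (sJ x n \<beta> \<delta> J b) (i, \<delta>)"
proof -
  have fin: "finite J" using assms(1) finite_subset by blast
  have dvd: "mdvd (\<iota> j, \<beta> j) (i, \<delta>)" if "j \<in> J" for j
    using XJ_dvd[OF fin assms(2) that] .
  have \<delta>: "\<delta> \<in> expv n"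
    using XJ_in_expv[OF fin assms(2)] exponent_in_expv assms(1) by blast
  have "\<And>j. j \<in> J \<Longrightarrow> b j \<in> R" "syz_sum \<delta> J b = 0" using assms(3) by (simp_all add: syzR_iff)
  then show ?thesis using sJ_in_syzL[OF assms(1) dvd \<delta>] sJ_homog[OF assms(1) dvd \<delta>] by blast
qed

lemma syz_sum_in_R:
  assumes "J \<subseteq> {..<t}" "\<delta> \<in> expv n" "\<And>j. j \<in> J \<Longrightarrow> b j \<in> R"
  shows "syz_sum \<delta> J b \<in> R"
  unfolding syz_sum_def using assms c_in_R exponent_in_expv
  by (intro R_sum R_mult sig_pow_in_R cpair_in_R gam_in_expv) auto

lemma mon_mult_sJ:
  assumes "\<And>j k. j \<in> J \<Longrightarrow> \<beta> j k \<le> \<delta>' k" "\<delta>' \<in> expv n" "\<theta> \<in> expv n"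
    and "\<And>j. j \<in> J \<Longrightarrow> b j \<in> R"
  shows "(\<lambda>j. mon x n \<theta> * sJ x n \<beta> \<delta>' J b j)
    = sJ x n \<beta> (\<lambda>k. \<theta> k + \<delta>' k) J (\<lambda>j. sig_pow R x n \<theta> (b j) * cpair R x n \<theta> (gam \<beta> \<delta>' j))"
proof
  fix j
  show "mon x n \<theta> * sJ x n \<beta> \<delta>' J b j = sJ x n \<beta> (\<lambda>k. \<theta> k + \<delta>' k) J
          (\<lambda>j. sig_pow R x n \<theta> (b j) * cpair R x n \<theta> (gam \<beta> \<delta>' j)) j"
  proof (cases "j \<in> J")
    case True
    have "(\<lambda>k. \<theta> k + gam \<beta> \<delta>' j k) = gam \<beta> (\<lambda>k. \<theta> k + \<delta>' k) j"
      using assms(1)[OF True] by (auto simp: gam_def fun_eq_iff)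
    moreover have "mon x n \<theta> * (b j * mon x n (gam \<beta> \<delta>' j)) = (1 * mon x n \<theta>) * (b j * mon x n (gam \<beta> \<delta>' j))"
      by simp
    ultimately show ?thesis
      using True term_mult_term[OF R_one assms(4)[OF True] assms(3) gam_in_expv[OF assms(2)]]
      by (simp add: sJ_def)
  qed (simp add: sJ_def)
qed

lemma syz_sum_shift:
  assumes "J \<subseteq> {..<t}" "\<And>j. j \<in> J \<Longrightarrow> mdvd (\<iota> j, \<beta> j) (i, \<delta>')" "\<delta>' \<in> expv n" "\<theta> \<in> expv n"
    and "\<And>j. j \<in> J \<Longrightarrow> b j \<in> R"
  shows "syz_sum (\<lambda>k. \<theta> k + \<delta>' k) J (\<lambda>j. sig_pow R x n \<theta> (b j) * cpair R x n \<theta> (gam \<beta> \<delta>' j))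
    = sig_pow R x n \<theta> (syz_sum \<delta>' J b) * cpair R x n \<theta> \<delta>'"
proof -
  let ?\<delta> = "\<lambda>k. \<theta> k + \<delta>' k"
    and ?g = "\<lambda>j. sig_pow R x n \<theta> (b j) * cpair R x n \<theta> (gam \<beta> \<delta>' j)"
  have \<delta>: "?\<delta> \<in> expv n" using assms(3,4) by (simp add: expv_def)
  have le: "\<beta> j k \<le> \<delta>' k" if "j \<in> J" for j k using assms(2)[OF that] by (simp add: mdvd_def)
  have dvd: "mdvd (\<iota> j, \<beta> j) (i, ?\<delta>)" if "j \<in> J" for j
    using assms(2)[OF that] by (auto simp: mdvd_def intro: trans_le_add2)
  have g: "?g j \<in> R" if "j \<in> J" for j
    using assms(3-5) that by (intro R_mult sig_pow_in_R cpair_in_R gam_in_expv) auto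
  have s': "syz_sum \<delta>' J b \<in> R" by (rule syz_sum_in_R[OF assms(1,3,5)])
  have "syz_sum ?\<delta> J ?g * mon x n ?\<delta> = row_sum (sJ x n \<beta> ?\<delta> J ?g) i"
    using row_sum_sJ[OF assms(1) dvd \<delta> g] by simp
  also have "\<dots> = mon x n \<theta> * row_sum (sJ x n \<beta> \<delta>' J b) i"
    by (simp only: mon_mult_sJ[OF le assms(3-5), symmetric] row_sum_scale)
  also have "\<dots> = (mon x n \<theta> * syz_sum \<delta>' J b) * mon x n \<delta>'"
    using row_sum_sJ[OF assms(1,2,3,5)] by (simp add: mult.assoc)
  also have "\<dots> = (sig_pow R x n \<theta> (syz_sum \<delta>' J b) * cpair R x n \<theta> \<delta>') * mon x n ?\<delta>"
    using mon_mult_eq[OF s'] mon_mult_mon_cpair[OF assms(4,3)] by (simp add: mult.assoc)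
  finally have eq: "syz_sum ?\<delta> J ?g * mon x n ?\<delta>
      = (sig_pow R x n \<theta> (syz_sum \<delta>' J b) * cpair R x n \<theta> \<delta>') * mon x n ?\<delta>" .
  have "sig_pow R x n \<theta> (syz_sum \<delta>' J b) * cpair R x n \<theta> \<delta>' \<in> R"
    by (intro R_mult sig_pow_in_R cpair_in_R s' assms(3,4))
  then show ?thesis using mon_right_cancel[OF \<delta> syz_sum_in_R[OF assms(1) \<delta> g] _ eq] by blast
qed

lemma syz_sum_cong: "(\<And>j. j \<in> J \<Longrightarrow> b j = b' j) \<Longrightarrow> syz_sum \<delta> J b = syz_sum \<delta> J b'"
  by (auto simp: syz_sum_def intro: sum.cong)

definition syz_generators :: "(nat set \<Rightarrow> (nat \<Rightarrow> 'a) set) \<Rightarrow> (nat \<Rightarrow> 'a) set" where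
  "syz_generators B = {sJ x n \<beta> \<delta> J b | J i \<delta> b. J \<subseteq> {..<t} \<and> J \<noteq> {} \<and> saturated t \<iota> \<beta> J
      \<and> XJ \<iota> \<beta> J = Some (i, \<delta>) \<and> b \<in> B J}"

lemma scaled_sJ_in_span:
  assumes "J \<subseteq> {..<t}" "J \<noteq> {}" "saturated t \<iota> \<beta> J" "XJ \<iota> \<beta> J = Some (i, \<delta>)"
    and "vspan R (B J) = syzR R x n c \<beta> \<delta> J" "b \<in> syzR R x n c \<beta> \<delta> J"
  shows "(\<lambda>j. a * sJ x n \<beta> \<delta> J b j) \<in> vspan UNIV (syz_generators B)"
proof -
  have "b \<in> vspan R (B J)" using assms(5,6) by simp
  then obtain F e where F: "finite F" "F \<subseteq> B J" "b = (\<lambda>j. \<Sum>v\<in>F. e v * v j)"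
    unfolding vspan_def by blast
  have "sJ x n \<beta> \<delta> J v \<in> vspan UNIV (syz_generators B)" if "v \<in> F" for v
    using assms(1-4) F(2) that unfolding syz_generators_def
    by (intro vspan_UNIV_base CollectI exI[of _ J] exI[of _ i] exI[of _ \<delta>] exI[of _ v]) auto
  then have "(\<lambda>j. \<Sum>v\<in>F. e v * sJ x n \<beta> \<delta> J v j) \<in> vspan UNIV (syz_generators B)"
    by (rule vspan_UNIV_lincomb[OF F(1)])
  then have "sJ x n \<beta> \<delta> J b \<in> vspan UNIV (syz_generators B)"
    by (simp only: F(3) sJ_lincomb)
  then show ?thesis by (rule vspan_UNIV_scale)
qed

definition divisor_set :: "nat \<Rightarrow> (nat \<Rightarrow> nat) \<Rightarrow> nat set" where
  "divisor_set i \<delta> = {j. j < t \<and> mdvd (\<iota> j, \<beta> j) (i, \<delta>)}"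

lemma divisor_set_subset: "divisor_set i \<delta> \<subseteq> {..<t}"
  by (auto simp: divisor_set_def)

lemma XJ_divisor_set:
  assumes "divisor_set i \<delta> \<noteq> {}"
  obtains \<delta>' where "XJ \<iota> \<beta> (divisor_set i \<delta>) = Some (i, \<delta>')" "\<And>k. \<delta>' k \<le> \<delta> k"
proof -
  let ?J = "divisor_set i \<delta>"
  have fin: "finite ?J" using divisor_set_subset finite_subset by blast
  have "XJ \<iota> \<beta> ?J = Some (i, \<lambda>k. Max ((\<lambda>j. \<beta> j k) ` ?J))"
    using assms by (simp add: XJ_eq_Some_iff divisor_set_def mdvd_def)
  moreover have "Max ((\<lambda>j. \<beta> j k) ` ?J) \<le> \<delta> k" for k
    using fin assms by (simp add: divisor_set_def mdvd_def)
  ultimately show ?thesis using that by blast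
qed

lemma saturated_divisor_set:
  assumes "XJ \<iota> \<beta> (divisor_set i \<delta>) = Some (i, \<delta>')" "\<And>k. \<delta>' k \<le> \<delta> k"
  shows "saturated t \<iota> \<beta> (divisor_set i \<delta>)"
  unfolding saturated_def
proof (intro allI impI)
  fix j X assume "j < t" "XJ \<iota> \<beta> (divisor_set i \<delta>) = Some X" "mdvd (\<iota> j, \<beta> j) X"
  with assms show "j \<in> divisor_set i \<delta>"
    by (auto simp: divisor_set_def mdvd_def intro: order.trans)
qed

lemma sJ_eq_mon_mult_sJ:
  assumes "J \<subseteq> {..<t}" "\<And>j. j \<in> J \<Longrightarrow> mdvd (\<iota> j, \<beta> j) (i, \<delta>')" "\<delta>' \<in> expv n" "\<delta> \<in> expv n"
    and "\<And>k. \<delta>' k \<le> \<delta> k" "\<And>j. j \<in> J \<Longrightarrow> g j \<in> R"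
  obtains b where "\<And>j. j \<in> J \<Longrightarrow> b j \<in> R" "\<And>j. j \<notin> J \<Longrightarrow> b j = 0"
    and "sJ x n \<beta> \<delta> J g = (\<lambda>j. mon x n (\<lambda>k. \<delta> k - \<delta>' k) * sJ x n \<beta> \<delta>' J b j)"
    and "syz_sum \<delta> J g
      = sig_pow R x n (\<lambda>k. \<delta> k - \<delta>' k) (syz_sum \<delta>' J b) * cpair R x n (\<lambda>k. \<delta> k - \<delta>' k) \<delta>'"
proof -
  define \<theta> where "\<theta> = (\<lambda>k. \<delta> k - \<delta>' k)"
  have \<theta>: "\<theta> \<in> expv n" using assms(4) by (auto simp: \<theta>_def expv_def)
  have \<delta>_eq: "(\<lambda>k. \<theta> k + \<delta>' k) = \<delta>" using assms(5) by (auto simp: \<theta>_def fun_eq_iff)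
  have "\<forall>j\<in>J. \<exists>r. r \<in> R \<and> sig_pow R x n \<theta> r * cpair R x n \<theta> (gam \<beta> \<delta>' j) = g j"
    using sig_pow_solve[OF assms(6) unit_in_cpair[OF \<theta> gam_in_expv[OF assms(3)]]] by metis
  then obtain b0 where b0: "\<And>j. j \<in> J \<Longrightarrow> b0 j \<in> R"
    "\<And>j. j \<in> J \<Longrightarrow> sig_pow R x n \<theta> (b0 j) * cpair R x n \<theta> (gam \<beta> \<delta>' j) = g j"
    by (metis bchoice)
  define b where "b j = (if j \<in> J then b0 j else 0)" for j
  have bR: "b j \<in> R" if "j \<in> J" for j using b0(1) that by (simp add: b_def)
  have sol: "sig_pow R x n \<theta> (b j) * cpair R x n \<theta> (gam \<beta> \<delta>' j) = g j" if "j \<in> J" for j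
    using b0(2) that by (simp add: b_def)
  have le: "\<beta> j k \<le> \<delta>' k" if "j \<in> J" for j k using assms(2)[OF that] by (simp add: mdvd_def)
  let ?g = "\<lambda>j. sig_pow R x n \<theta> (b j) * cpair R x n \<theta> (gam \<beta> \<delta>' j)"
  have "sJ x n \<beta> \<delta> J g = sJ x n \<beta> \<delta> J ?g" "syz_sum \<delta> J g = syz_sum \<delta> J ?g"
    using sol by (auto intro!: sJ_cong syz_sum_cong)
  moreover have "(\<lambda>j. mon x n \<theta> * sJ x n \<beta> \<delta>' J b j) = sJ x n \<beta> \<delta> J ?g"
    using mon_mult_sJ[where b = b, OF le assms(3) \<theta> bR] by (simp add: \<delta>_eq)
  moreover have "syz_sum \<delta> J ?g = sig_pow R x n \<theta> (syz_sum \<delta>' J b) * cpair R x n \<theta> \<delta>'"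
    using syz_sum_shift[where b = b, OF assms(1-3) \<theta> bR] by (simp add: \<delta>_eq)
  ultimately show ?thesis using that[of b] bR by (simp add: b_def \<theta>_def)
qed

lemma sJ_divisor_set_in_span:
  assumes gen: "\<And>J i \<delta>. J \<subseteq> {..<t} \<Longrightarrow> J \<noteq> {} \<Longrightarrow> saturated t \<iota> \<beta> J \<Longrightarrow>
      XJ \<iota> \<beta> J = Some (i, \<delta>) \<Longrightarrow> vspan R (B J) = syzR R x n c \<beta> \<delta> J"
    and \<delta>: "\<delta> \<in> expv n" and g: "\<And>j. j \<in> divisor_set i \<delta> \<Longrightarrow> g j \<in> R"
    and syz: "syz_sum \<delta> (divisor_set i \<delta>) g = 0"
  shows "sJ x n \<beta> \<delta> (divisor_set i \<delta>) g \<in> vspan UNIV (syz_generators B)"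
proof (cases "divisor_set i \<delta> = {}")
  case True
  then show ?thesis using vspan_UNIV_zero by (simp add: sJ_def)
next
  case False
  let ?J = "divisor_set i \<delta>"
  obtain \<delta>' where X: "XJ \<iota> \<beta> ?J = Some (i, \<delta>')" and le: "\<And>k. \<delta>' k \<le> \<delta> k"
    using XJ_divisor_set[OF False] by blast
  have fin: "finite ?J" using divisor_set_subset finite_subset by blast
  have dvd: "mdvd (\<iota> j, \<beta> j) (i, \<delta>')" if "j \<in> ?J" for j using XJ_dvd[OF fin X that] .
  have \<delta>': "\<delta>' \<in> expv n"
    using XJ_in_expv[OF fin X] exponent_in_expv divisor_set_subset by blast
  obtain b where bR: "\<And>j. j \<in> ?J \<Longrightarrow> b j \<in> R" and b0: "\<And>j. j \<notin> ?J \<Longrightarrow> b j = 0"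
    and eq: "sJ x n \<beta> \<delta> ?J g = (\<lambda>j. mon x n (\<lambda>k. \<delta> k - \<delta>' k) * sJ x n \<beta> \<delta>' ?J b j)"
    and sums: "syz_sum \<delta> ?J g = sig_pow R x n (\<lambda>k. \<delta> k - \<delta>' k) (syz_sum \<delta>' ?J b)
                                  * cpair R x n (\<lambda>k. \<delta> k - \<delta>' k) \<delta>'"
    by (rule sJ_eq_mon_mult_sJ[of ?J i \<delta>' \<delta> g]) (use divisor_set_subset dvd \<delta>' \<delta> le g in auto)
  have "(\<lambda>k. \<delta> k - \<delta>' k) \<in> expv n" using \<delta> by (auto simp: expv_def)
  then have "sig_pow R x n (\<lambda>k. \<delta> k - \<delta>' k) (syz_sum \<delta>' ?J b) = 0"
    using unit_in_mult_eq_zero unit_in_cpair[OF _ \<delta>'] sums syz by metis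
  moreover have "syz_sum \<delta>' ?J b \<in> R"
    by (rule syz_sum_in_R) (use divisor_set_subset \<delta>' bR in auto)
  ultimately have "syz_sum \<delta>' ?J b = 0" using sig_pow_eq_zero_iff by blast
  then have "b \<in> syzR R x n c \<beta> \<delta>' ?J" using bR b0 by (simp add: syzR_iff)
  then show ?thesis unfolding eq
    using scaled_sJ_in_span[OF divisor_set_subset False saturated_divisor_set[OF X le] X]
      gen[OF divisor_set_subset False saturated_divisor_set[OF X le] X] by blast
qed

definition degrees :: "(nat \<Rightarrow> 'a) \<Rightarrow> (nat \<Rightarrow> nat) set" where
  "degrees h = (\<Union>j<t. (\<lambda>\<alpha> k. \<alpha> k + \<beta> j k) ` {\<alpha>. coord R x n (h j) \<alpha> \<noteq> 0})"

definition homog_component :: "(nat \<Rightarrow> 'a) \<Rightarrow> nat \<Rightarrow> (nat \<Rightarrow> nat) \<Rightarrow> nat \<Rightarrow> 'a" where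
  "homog_component h i \<delta> = sJ x n \<beta> \<delta> (divisor_set i \<delta>) (\<lambda>j. coord R x n (h j) (gam \<beta> \<delta> j))"

lemma finite_degrees: "finite (degrees h)"
  using coord_is_repr by (auto simp: degrees_def is_repr_def)

lemma degrees_subset_expv: "degrees h \<subseteq> expv n"
proof
  fix \<delta> assume "\<delta> \<in> degrees h"
  then obtain j \<alpha> where "j < t" "coord R x n (h j) \<alpha> \<noteq> 0" "\<delta> = (\<lambda>k. \<alpha> k + \<beta> j k)"
    by (auto simp: degrees_def)
  moreover have "\<alpha> \<in> expv n" using calculation(2) coord_is_repr[of "h j"] by (auto simp: is_repr_def)
  ultimately show "\<delta> \<in> expv n" using exponent_in_expv by (auto simp: expv_def)
qed

lemma sum_homog_components:
  assumes "\<And>j. j \<ge> t \<Longrightarrow> h j = 0"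
  shows "h = (\<lambda>j. \<Sum>p\<in>\<iota> ` {..<t} \<times> degrees h. homog_component h (fst p) (snd p) j)"
proof
  fix j
  show "h j = (\<Sum>p\<in>\<iota> ` {..<t} \<times> degrees h. homog_component h (fst p) (snd p) j)"
  proof (cases "j < t")
    case True
    let ?G = "\<lambda>\<delta>. if \<forall>k. \<beta> j k \<le> \<delta> k
               then coord R x n (h j) (gam \<beta> \<delta> j) * mon x n (gam \<beta> \<delta> j) else 0"
    have "homog_component h i \<delta> j = (if i = \<iota> j then ?G \<delta> else 0)" for i \<delta>
      using True by (auto simp: homog_component_def sJ_def divisor_set_def mdvd_def)
    then have "(\<Sum>p\<in>\<iota> ` {..<t} \<times> degrees h. homog_component h (fst p) (snd p) j)
        = (\<Sum>p\<in>\<iota> ` {..<t} \<times> degrees h. if fst p = \<iota> j then ?G (snd p) else 0)"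
      by simp
    also have "\<dots> = (\<Sum>\<delta>\<in>degrees h. ?G \<delta>)"
      using True by (intro sum_product_if_fst finite_degrees) auto
    also have "\<dots> = h j"
      unfolding gam_def using True by (intro sum_shifted_terms finite_degrees) (auto simp: degrees_def)
    finally show ?thesis by simp
  qed (simp add: assms homog_component_def sJ_def divisor_set_def)
qed

lemma row_sum_homog_component:
  assumes "\<delta> \<in> expv n"
  shows "row_sum (homog_component h i' \<delta>) i
    = (if i = i' then syz_sum \<delta> (divisor_set i' \<delta>) (\<lambda>j. coord R x n (h j) (gam \<beta> \<delta> j)) * mon x n \<delta>
       else 0)"
  unfolding homog_component_def
  by (rule row_sum_sJ[where b = "\<lambda>j. coord R x n (h j) (gam \<beta> \<delta> j)"])
    (auto simp: assms coord_in_R divisor_set_def)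

lemma syz_sum_homog_component:
  assumes "h \<in> syzL x n m t c \<iota> \<beta>" "i \<in> \<iota> ` {..<t}" "\<delta> \<in> degrees h"
  shows "syz_sum \<delta> (divisor_set i \<delta>) (\<lambda>j. coord R x n (h j) (gam \<beta> \<delta> j)) = 0"
proof -
  let ?I = "\<iota> ` {..<t}" and ?D = "degrees h"
    and ?s = "\<lambda>\<delta>. syz_sum \<delta> (divisor_set i \<delta>) (\<lambda>j. coord R x n (h j) (gam \<beta> \<delta> j))"
  have "i < m" using assms(2) row_index_less by blast
  then have "0 = row_sum h i" using assms(1) by (simp add: syzL_iff)
  also have "\<dots> = (\<Sum>p\<in>?I \<times> ?D. row_sum (homog_component h (fst p) (snd p)) i)"
    using assms(1) by (subst sum_homog_components) (simp_all add: syzL_iff row_sum_sum)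
  also have "\<dots> = (\<Sum>p\<in>?I \<times> ?D. if fst p = i then ?s (snd p) * mon x n (snd p) else 0)"
  proof (rule sum.cong[OF refl])
    fix p assume "p \<in> ?I \<times> ?D"
    then have "snd p \<in> expv n" using degrees_subset_expv[of h] by auto
    then show "row_sum (homog_component h (fst p) (snd p)) i
        = (if fst p = i then ?s (snd p) * mon x n (snd p) else 0)"
      by (auto simp: row_sum_homog_component)
  qed
  also have "\<dots> = (\<Sum>\<delta>\<in>?D. ?s \<delta> * mon x n \<delta>)"
    using assms(2) finite_degrees by (intro sum_product_if_fst) auto
  finally have "(\<Sum>\<delta>\<in>?D. ?s \<delta> * mon x n \<delta>) = 0" by simp
  moreover have "?s \<delta> \<in> R" if "\<delta> \<in> ?D" for \<delta>
    using that degrees_subset_expv[of h] coord_in_R by (intro syz_sum_in_R) (auto simp: divisor_set_def)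
  ultimately show ?thesis
    using lincomb_mon_eq_zeroD[OF finite_degrees degrees_subset_expv, where s = ?s] assms(3) by blast
qed

lemma syzL_subset_span:
  assumes "\<And>J i \<delta>. J \<subseteq> {..<t} \<Longrightarrow> J \<noteq> {} \<Longrightarrow> saturated t \<iota> \<beta> J \<Longrightarrow>
      XJ \<iota> \<beta> J = Some (i, \<delta>) \<Longrightarrow> vspan R (B J) = syzR R x n c \<beta> \<delta> J"
  shows "syzL x n m t c \<iota> \<beta> \<subseteq> vspan UNIV (syz_generators B)"
proof
  fix h assume h: "h \<in> syzL x n m t c \<iota> \<beta>"
  have "homog_component h (fst p) (snd p) \<in> vspan UNIV (syz_generators B)"
    if "p \<in> \<iota> ` {..<t} \<times> degrees h" for p
    unfolding homog_component_def
    using that degrees_subset_expv[of h] coord_in_R syz_sum_homog_component[OF h]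
    by (intro sJ_divisor_set_in_span[OF assms]) auto
  then have "(\<lambda>j. \<Sum>p\<in>\<iota> ` {..<t} \<times> degrees h. 1 * homog_component h (fst p) (snd p) j)
      \<in> vspan UNIV (syz_generators B)"
    using finite_degrees by (intro vspan_UNIV_lincomb) auto
  then show "h \<in> vspan UNIV (syz_generators B)"
    using sum_homog_components[of h] h by (simp add: syzL_iff)
qed

lemma span_subset_syzL:
  assumes "\<And>J i \<delta>. J \<subseteq> {..<t} \<Longrightarrow> J \<noteq> {} \<Longrightarrow> saturated t \<iota> \<beta> J \<Longrightarrow>
      XJ \<iota> \<beta> J = Some (i, \<delta>) \<Longrightarrow> B J \<subseteq> syzR R x n c \<beta> \<delta> J"
  shows "vspan UNIV (syz_generators B) \<subseteq> syzL x n m t c \<iota> \<beta>"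
proof
  fix v assume "v \<in> vspan UNIV (syz_generators B)"
  then obtain F a where F: "finite F" "F \<subseteq> syz_generators B" "v = (\<lambda>j. \<Sum>s\<in>F. a s * s j)"
    unfolding vspan_def by blast
  have "s \<in> syzL x n m t c \<iota> \<beta>" if "s \<in> F" for s
  proof -
    have "s \<in> syz_generators B" using F(2) \<open>s \<in> F\<close> by blast
    then obtain J i \<delta> b where s: "s = sJ x n \<beta> \<delta> J b" and J: "J \<subseteq> {..<t}" "J \<noteq> {}"
      "saturated t \<iota> \<beta> J" and X: "XJ \<iota> \<beta> J = Some (i, \<delta>)" and b: "b \<in> B J"
      unfolding syz_generators_def mem_Collect_eq by blast
    have "b \<in> syzR R x n c \<beta> \<delta> J" using assms[OF J X] b by blast
    then show ?thesis unfolding s using sJ_syzygy_and_homog[OF J(1) X] by blast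
  qed
  then show "v \<in> syzL x n m t c \<iota> \<beta>" unfolding F(3) by (rule syzL_lincomb)
qed

end

theorem lemma38:
  fixes R :: "'a::ring_1 set" and x :: "nat \<Rightarrow> 'a" and n m t :: nat
    and c :: "nat \<Rightarrow> 'a" and \<iota> :: "nat \<Rightarrow> nat" and \<beta> :: "nat \<Rightarrow> nat \<Rightarrow> nat"
    and B :: "nat set \<Rightarrow> (nat \<Rightarrow> 'a) set"
  assumes "sigma_PBW R x n" and "quasi_commutative R x n" and "bijective_ext R x n"
    and "left_noetherian R"
    and "\<forall>j<t. c j \<in> R \<and> c j \<noteq> 0"
    and "\<forall>j<t. \<iota> j < m \<and> \<beta> j \<in> expv n"
    and "\<forall>J i \<delta>. J \<subseteq> {..<t} \<and> J \<noteq> {} \<and> saturated t \<iota> \<beta> J \<and> XJ \<iota> \<beta> J = Some (i, \<delta>) \<longrightarrow>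
           finite (B J) \<and> B J \<subseteq> syzR R x n c \<beta> \<delta> J \<and> vspan R (B J) = syzR R x n c \<beta> \<delta> J"
  shows "(\<forall>J i \<delta> b. J \<subseteq> {..<t} \<and> J \<noteq> {} \<and> saturated t \<iota> \<beta> J \<and> XJ \<iota> \<beta> J = Some (i, \<delta>)
            \<and> b \<in> B J \<longrightarrow>
            sJ x n \<beta> \<delta> J b \<in> syzL x n m t c \<iota> \<beta> \<and> homog R x n t \<iota> \<beta> (sJ x n \<beta> \<delta> J b) (i, \<delta>))
       \<and> syzL x n m t c \<iota> \<beta> = vspan UNIV
            {sJ x n \<beta> \<delta> J b | J i \<delta> b. J \<subseteq> {..<t} \<and> J \<noteq> {} \<and> saturated t \<iota> \<beta> J
                 \<and> XJ \<iota> \<beta> J = Some (i, \<delta>) \<and> b \<in> B J}"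
proof -
  \<comment> \<open>Left Noetherianity only guarantees that the generating sets \<open>B J\<close> exist.\<close>
  interpret monomial_row R x n m t c \<iota> \<beta>
    using assms(1-3,5,6) by unfold_locales auto
  have B_syz: "B J \<subseteq> syzR R x n c \<beta> \<delta> J"
    and B_gen: "vspan R (B J) = syzR R x n c \<beta> \<delta> J"
    if "J \<subseteq> {..<t}" "J \<noteq> {}" "saturated t \<iota> \<beta> J" "XJ \<iota> \<beta> J = Some (i, \<delta>)" for J i \<delta>
    using assms(7) that by blast+
  have "syzL x n m t c \<iota> \<beta> = vspan UNIV (syz_generators B)"
    using syzL_subset_span[OF B_gen] span_subset_syzL[OF B_syz] by (rule subset_antisym)
  moreover have "sJ x n \<beta> \<delta> J b \<in> syzL x n m t c \<iota> \<beta> \<and> homog R x n t \<iota> \<beta> (sJ x n \<beta> \<delta> J b) (i, \<delta>)"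
    if "J \<subseteq> {..<t}" "J \<noteq> {}" "saturated t \<iota> \<beta> J" "XJ \<iota> \<beta> J = Some (i, \<delta>)" "b \<in> B J"
    for J i \<delta> b
    using sJ_syzygy_and_homog[OF that(1,4)] B_syz[OF that(1-4)] that(5) by blast
  ultimately show ?thesis unfolding syz_generators_def by blast
qed

end
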